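(* For every round $k$-sphere $S\subset\mathbb R^n$ there are a classical linkage $\mathcal L$ in $\mathbb R^n$ and a vertex $v\in\mathcal V(\mathcal L)$ such that $S=\mathcal{SC}(\mathcal L,\{v\})$; moreover the map $\rho_v\colon\mathcal C(\mathcal L)\to\mathbb R^n$, $\varphi\mapsto\varphi(v)$, is an isomorphism onto its image $S$.
   Context: A classical linkage in $\mathbb R^n$ is $\mathcal L=(L,\ell,V,\mu)$: $L$ a finite one-dimensional simplicial complex (vertex set $\mathcal V(L)=\mathcal V(\mathcal L)$, edge set $\mathcal E(L)$), $\ell\colon\mathcal E(L)\to(0,\infty)$, $V\subset\mathcal V(L)$ fixed vertices, $\mu\colon V\to\mathbb R^n$. $\mathcal C(\mathcal L)=\{\varphi\colon\mathcal V(L)\to\mathbb R^n\mid\varphi(v)=\mu(v)\ (v\in V),\ |\varphi(v)-\varphi(w)|=\ell(vw)\ (vw\in\mathcal E(L))\}$ and $\mathcal{SC}(\mathcal L,W)=\{\varphi|_W\mid\varphi\in\mathcal C(\mathcal L)\}$. A round $k$-sphere in $\mathbb R^n$ is the set of points at distance $r>0$ from a center point within some $(k+1)$-dimensional affine subspace containing the center. A homeomorphism $g$ is an isomorphism if $g$ and $g^{-1}$ are restrictions of entire rational functions. *)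

theory Defs
  imports "HOL-Analysis.Analysis"
begin

inductive_set poly_funs :: "('a \<Rightarrow> real) set \<Rightarrow> ('a \<Rightarrow> real) set"
  for coords :: "('a \<Rightarrow> real) set" where
  const: "(\<lambda>_. c) \<in> poly_funs coords"
| coord: "f \<in> coords \<Longrightarrow> f \<in> poly_funs coords"
| add: "f \<in> poly_funs coords \<Longrightarrow> g \<in> poly_funs coords \<Longrightarrow> (\<lambda>x. f x + g x) \<in> poly_funs coords"
| mult: "f \<in> poly_funs coords \<Longrightarrow> g \<in> poly_funs coords \<Longrightarrow> (\<lambda>x. f x * g x) \<in> poly_funs coords"

definition vec_coords :: "(real^'n \<Rightarrow> real) set" where
  "vec_coords = {(\<lambda>x. x $ i) | i. True}"

text \<open>Coordinates of the space (R^n)^Vs of maps from the vertex set Vs to R^n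
  (maps are represented as functions nat => real^n that vanish off Vs).\<close>
definition cfg_coords :: "nat set \<Rightarrow> ((nat \<Rightarrow> real^'n) \<Rightarrow> real) set" where
  "cfg_coords Vs = {(\<lambda>\<phi>. \<phi> w $ i) | w i. w \<in> Vs}"

definition classical_linkage ::
  "nat set \<Rightarrow> nat set set \<Rightarrow> (nat set \<Rightarrow> real) \<Rightarrow> nat set \<Rightarrow> (nat \<Rightarrow> real^'n) \<Rightarrow> bool" where
  "classical_linkage Vs E l F mu \<longleftrightarrow>
     finite Vs \<and> E \<noteq> {} \<and>
     (\<forall>e\<in>E. \<exists>a b. a \<noteq> b \<and> a \<in> Vs \<and> b \<in> Vs \<and> e = {a, b}) \<and>
     (\<forall>e\<in>E. l e > 0) \<and> F \<subseteq> Vs"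

definition conf_space ::
  "nat set \<Rightarrow> nat set set \<Rightarrow> (nat set \<Rightarrow> real) \<Rightarrow> nat set \<Rightarrow> (nat \<Rightarrow> real^'n)
   \<Rightarrow> (nat \<Rightarrow> real^'n) set" where
  "conf_space Vs E l F mu =
     {\<phi>. (\<forall>v. v \<notin> Vs \<longrightarrow> \<phi> v = 0) \<and> (\<forall>v\<in>F. \<phi> v = mu v) \<and>
          (\<forall>a b. {a, b} \<in> E \<longrightarrow> dist (\<phi> a) (\<phi> b) = l {a, b})}"

definition round_sphere :: "nat \<Rightarrow> (real^'n) set \<Rightarrow> bool" where
  "round_sphere k S \<longleftrightarrow>
     (\<exists>c r A. r > 0 \<and> affine A \<and> aff_dim A = int (k + 1) \<and> c \<in> A \<and>
        S = {x \<in> A. dist x c = r})"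

definition cfg_isomorphism ::
  "nat set \<Rightarrow> (nat \<Rightarrow> real^'n) set \<Rightarrow> (real^'n) set \<Rightarrow> ((nat \<Rightarrow> real^'n) \<Rightarrow> real^'n) \<Rightarrow> bool" where
  "cfg_isomorphism Vs X Y f \<longleftrightarrow>
     (\<exists>g. homeomorphism X Y f g \<and>
        (\<exists>p. (\<forall>i. (\<lambda>\<phi>. p \<phi> $ i) \<in> poly_funs (cfg_coords Vs)) \<and> (\<forall>\<phi>\<in>X. f \<phi> = p \<phi>)) \<and>
        (\<exists>q. (\<forall>w\<in>Vs. \<forall>i. (\<lambda>x. q x w $ i) \<in> poly_funs vec_coords) \<and>
             (\<forall>x\<in>Y. \<forall>w\<in>Vs. g x w = q x w)))"

end

theory Submission
  imports Defs
begin

text \<open>Write the affine space of the sphere \<open>S\<close> (centre \<open>c\<close>, radius \<open>r\<close>) as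
  \<open>{x. \<forall>u\<in>U. (x - c) \<bullet> u = 0}\<close> with \<open>U\<close> finite. If \<open>dist x c = r\<close> then
  \<open>dist x (c + u)\<^sup>2 = r\<^sup>2 + \<bar>u\<bar>\<^sup>2 - 2 (x - c) \<bullet> u\<close>, so \<open>S\<close> is the intersection of
  the finitely many spheres of radius \<open>sqrt (r\<^sup>2 + \<bar>u\<bar>\<^sup>2)\<close> about the points \<open>c + u\<close>,
  \<open>u \<in> U \<union> {0}\<close>. Such an intersection is realised by a star: a free centre vertex
  joined by bars of these lengths to vertices pinned at the points \<open>c + u\<close>. A configuration
  of the star is determined by its centre, and the configuration with centre \<open>x\<close> depends
  polynomially (in fact affinely) on \<open>x\<close>.\<close>

lemma affine_eq_orthogonal_finite:
  fixes A :: "'a::euclidean_space set"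
  assumes "affine A" "c \<in> A"
  obtains U where "finite U" "A = {x. \<forall>u\<in>U. inner (x - c) u = 0}"
proof -
  obtain \<F> where \<F>: "finite \<F>" "affine hull A = \<Inter>\<F>"
    "\<And>h. h \<in> \<F> \<Longrightarrow> \<exists>a b. a \<noteq> 0 \<and> h = {x. a \<bullet> x = b}"
    using affine_hull_finite_intersection_hyperplanes by metis
  have A: "A = \<Inter>\<F>"
    using \<F>(2) assms(1) by (metis affine_hull_eq)
  have "\<exists>a. h = {x. inner (x - c) a = 0}" if h_in: "h \<in> \<F>" for h
  proof -
    obtain a b where h: "h = {x. a \<bullet> x = b}"
      using \<F>(3)[OF h_in] by blast
    have "b = a \<bullet> c"
      using assms(2) h_in h A by blast
    then have "h = {x. inner (x - c) a = 0}"
      by (auto simp: h inner_diff_left inner_diff_right inner_commute[of _ a])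
    then show ?thesis ..
  qed
  then obtain a where "\<And>h. h \<in> \<F> \<Longrightarrow> h = {x. inner (x - c) (a h) = 0}"
    by metis
  then have "A = {x. \<forall>u\<in>a ` \<F>. inner (x - c) u = 0}"
    using A by auto
  with \<F>(1) show thesis
    using that by blast
qed

lemma dist_add_right_sq:
  fixes x c u :: "'a::real_inner"
  shows "(dist x (c + u))\<^sup>2 = (dist x c)\<^sup>2 - 2 * inner (x - c) u + (norm u)\<^sup>2"
proof -
  have "dist x (c + u) = norm ((x - c) - u)"
    by (simp add: dist_norm algebra_simps)
  then show ?thesis
    by (simp add: dist_norm power2_norm_eq_inner inner_diff algebra_simps inner_commute)
qed

lemma sphere_in_affine_eq_Inter_spheres:
  fixes A :: "'a::euclidean_space set"
  assumes "affine A" "c \<in> A" "0 \<le> r"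
  obtains U where "finite U" "0 \<in> U"
    "{x \<in> A. dist x c = r} = {x. \<forall>u\<in>U. dist x (c + u) = sqrt (r\<^sup>2 + (norm u)\<^sup>2)}"
proof -
  obtain U where U: "finite U" "A = {x. \<forall>u\<in>U. inner (x - c) u = 0}"
    using affine_eq_orthogonal_finite[OF assms(1,2)] by blast
  have on_sphere: "dist x (c + u) = sqrt (r\<^sup>2 + (norm u)\<^sup>2) \<longleftrightarrow> inner (x - c) u = 0"
    if "dist x c = r" for x u
    using that dist_add_right_sq[of x c u] by (auto simp: real_sqrt_unique)
  have "{x \<in> A. dist x c = r} = {x. \<forall>u\<in>insert 0 U. dist x (c + u) = sqrt (r\<^sup>2 + (norm u)\<^sup>2)}"
    using U(2) on_sphere assms(3) by auto
  with U(1) show thesis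
    using that by blast
qed

definition star_edges :: "nat \<Rightarrow> nat set set" where
  "star_edges m = {{0, j} | j. j \<in> {1..m}}"

definition star_conf :: "nat \<Rightarrow> (nat \<Rightarrow> 'a::zero) \<Rightarrow> 'a \<Rightarrow> nat \<Rightarrow> 'a" where
  "star_conf m p x = (\<lambda>w. if w = 0 then x else if w \<in> {1..m} then p w else 0)"

lemma classical_linkage_star:
  assumes "1 \<le> m" "\<And>j. j \<in> {1..m} \<Longrightarrow> 0 < \<rho> j"
  shows "classical_linkage {0..m} (star_edges m) (\<lambda>e. \<rho> (Max e)) {1..m} p"
  unfolding classical_linkage_def
proof (intro conjI ballI)
  show "star_edges m \<noteq> {}"
    using assms(1) by (auto simp: star_edges_def)
  fix e assume "e \<in> star_edges m"
  then obtain j where j: "j \<in> {1..m}" "e = {0, j}"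
    by (auto simp: star_edges_def)
  then show "\<exists>a b. a \<noteq> b \<and> a \<in> {0..m} \<and> b \<in> {0..m} \<and> e = {a, b}"
    by (intro exI[of _ 0] exI[of _ j]) auto
  show "0 < \<rho> (Max e)"
    using j assms(2) by simp
qed auto

lemma star_edges_iff:
  "{a, b} \<in> star_edges m \<longleftrightarrow> (a = 0 \<and> b \<in> {1..m}) \<or> (b = 0 \<and> a \<in> {1..m})"
  by (auto simp: star_edges_def doubleton_eq_iff)

lemma conf_space_star:
  "conf_space {0..m} (star_edges m) (\<lambda>e. \<rho> (Max e)) {1..m} p =
     star_conf m p ` {x. \<forall>j\<in>{1..m}. dist x (p j) = \<rho> j}"
proof (intro equalityI subsetI)
  fix \<phi> assume \<phi>: "\<phi> \<in> conf_space {0..m} (star_edges m) (\<lambda>e. \<rho> (Max e)) {1..m} p"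
  then have "\<phi> = star_conf m p (\<phi> 0)"
    by (auto simp: conf_space_def star_conf_def fun_eq_iff)
  moreover have "dist (\<phi> 0) (p j) = \<rho> j" if "j \<in> {1..m}" for j
  proof -
    have "{0, j} \<in> star_edges m"
      using that by (simp add: star_edges_iff)
    then have "dist (\<phi> 0) (\<phi> j) = \<rho> (Max {0, j})"
      using \<phi> unfolding conf_space_def by blast
    then show ?thesis
      using \<phi> that by (simp add: conf_space_def)
  qed
  ultimately show "\<phi> \<in> star_conf m p ` {x. \<forall>j\<in>{1..m}. dist x (p j) = \<rho> j}"
    by blast
next
  fix \<phi> assume "\<phi> \<in> star_conf m p ` {x. \<forall>j\<in>{1..m}. dist x (p j) = \<rho> j}"
  then obtain x where "\<forall>j\<in>{1..m}. dist x (p j) = \<rho> j" "\<phi> = star_conf m p x"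
    by blast
  then show "\<phi> \<in> conf_space {0..m} (star_edges m) (\<lambda>e. \<rho> (Max e)) {1..m} p"
    by (auto simp: conf_space_def star_edges_iff star_conf_def dist_commute insert_commute)
qed

lemma homeomorphism_star_conf:
  "homeomorphism (star_conf m p ` T) T (\<lambda>\<phi>. \<phi> 0) (star_conf m p)"
proof (rule homeomorphismI)
  show "continuous_on (star_conf m p ` T) (\<lambda>\<phi>. \<phi> 0)"
    by (rule continuous_on_subset[OF continuous_on_product_coordinates]) simp
  show "continuous_on T (star_conf m p)"
    by (auto simp: star_conf_def intro!: continuous_intros)
qed (auto simp: star_conf_def)

lemma star_conf_component_poly:
  "(\<lambda>x. star_conf m p x w $ i) \<in> poly_funs vec_coords"
proof (cases "w = 0")
  case True
  then show ?thesis
    by (auto intro: poly_funs.coord simp: star_conf_def vec_coords_def)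
next
  case False
  then show ?thesis
    by (simp add: star_conf_def poly_funs.const)
qed

lemma cfg_isomorphism_star_conf:
  "cfg_isomorphism {0..m} (star_conf m p ` T) T (\<lambda>\<phi>. \<phi> 0)"
  unfolding cfg_isomorphism_def
proof (intro exI[of _ "star_conf m p"] conjI)
  have "\<forall>i. (\<lambda>\<phi>. \<phi> 0 $ i) \<in> poly_funs (cfg_coords {0..m})"
    by (auto intro: poly_funs.coord simp: cfg_coords_def)
  then show "\<exists>q. (\<forall>i. (\<lambda>\<phi>. q \<phi> $ i) \<in> poly_funs (cfg_coords {0..m})) \<and>
      (\<forall>\<phi>\<in>star_conf m p ` T. \<phi> 0 = q \<phi>)"
    by (intro exI[of _ "\<lambda>\<phi>. \<phi> 0"]) simp
qed (auto simp: homeomorphism_star_conf star_conf_component_poly)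

theorem lemma4p4:
  fixes S :: "(real^'n) set" and k :: nat
  assumes "round_sphere k S"
  shows "\<exists>Vs E l F (mu :: nat \<Rightarrow> real^'n) v.
           classical_linkage Vs E l F mu \<and> v \<in> Vs \<and>
           S = (\<lambda>\<phi>. \<phi> v) ` conf_space Vs E l F mu \<and>
           cfg_isomorphism Vs (conf_space Vs E l F mu) S (\<lambda>\<phi>. \<phi> v)"
proof -
  obtain c r A where r: "0 < r" and A: "affine A" "c \<in> A" and S: "S = {x \<in> A. dist x c = r}"
    using assms unfolding round_sphere_def by blast
  obtain U where U: "finite U" "0 \<in> U"
    and S_Inter: "S = {x. \<forall>u\<in>U. dist x (c + u) = sqrt (r\<^sup>2 + (norm u)\<^sup>2)}"
    using sphere_in_affine_eq_Inter_spheres[OF A, of r] r S by auto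
  define m where "m = card U"
  obtain h where h: "bij_betw h {1..m} U"
    using ex_bij_betw_nat_finite_1[OF U(1)] unfolding m_def ..
  define p :: "nat \<Rightarrow> real^'n" where "p j = c + h j" for j
  define \<rho> where "\<rho> j = sqrt (r\<^sup>2 + (norm (h j))\<^sup>2)" for j
  have m: "1 \<le> m"
    using U by (auto simp: m_def Suc_le_eq card_gt_0_iff)
  have \<rho>: "0 < \<rho> j" for j
    using r by (simp add: \<rho>_def add_pos_nonneg)
  have "S = {x. \<forall>j\<in>{1..m}. dist x (p j) = \<rho> j}"
    using S_Inter bij_betw_imp_surj_on[OF h] by (auto simp: p_def \<rho>_def)
  then have X: "conf_space {0..m} (star_edges m) (\<lambda>e. \<rho> (Max e)) {1..m} p = star_conf m p ` S"
    by (simp only: conf_space_star)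
  have "S = (\<lambda>\<phi>. \<phi> 0) ` conf_space {0..m} (star_edges m) (\<lambda>e. \<rho> (Max e)) {1..m} p"
    unfolding X using homeomorphism_image1[OF homeomorphism_star_conf] by metis
  moreover have "cfg_isomorphism {0..m} (conf_space {0..m} (star_edges m) (\<lambda>e. \<rho> (Max e)) {1..m} p)
      S (\<lambda>\<phi>. \<phi> 0)"
    unfolding X by (rule cfg_isomorphism_star_conf)
  ultimately show ?thesis
    using classical_linkage_star[OF m \<rho>]
    by (intro exI[of _ "{0..m}"] exI[of _ "star_edges m"] exI[of _ "\<lambda>e. \<rho> (Max e)"]
        exI[of _ "{1..m}"] exI[of _ p] exI[of _ 0]) simp
qed

end
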